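(* In the setting below, suppose $M_i(1)=M_i(0)$ for all $i$, and let $\alpha\in(0,1/2)$. Suppose $\mathcal I^\alpha_{\texttt o,k}$, $1\le k\le|\mathcal S|$, are random sets (functions of the observed data), each of the form $(c,\infty)$ or $[c,\infty)$ for some $c\in\overline{\mathbb R}$, such that $\mathbb P(\tau_{\texttt o(k)}\in\mathcal I^\alpha_{\texttt o,k}\text{ for all }1\le k\le|\mathcal S|)\ge1-2\alpha$. Define $\mathcal I^\alpha_{k,\texttt{sharp}}=\mathbb R$ for $1\le k\le|\mathcal S^\complement|$ and $\mathcal I^\alpha_{k,\texttt{sharp}}=\mathcal I^\alpha_{\texttt o,k-|\mathcal S^\complement|}$ for $|\mathcal S^\complement|+1\le k\le n$. Then $\mathbb P(\tau_{(k)}\in\mathcal I^\alpha_{k,\texttt{sharp}}\text{ for all }1\le k\le n)\ge1-2\alpha$.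
   Context: There are $n$ units with fixed potential outcomes $Y_i^\star(0),Y_i^\star(1)\in\mathbb R$ and fixed potential missingness indicators $M_i(0),M_i(1)\in\{0,1\}$; $\tau_i=Y_i^\star(1)-Y_i^\star(0)$. $\boldsymbol Z\in\{0,1\}^n$ is uniform over vectors with exactly $n_1$ ones ($n_1,n_0\ge1$ fixed, $n_1+n_0=n$), independent of all potential quantities. $M_i=Z_iM_i(1)+(1-Z_i)M_i(0)$; $\mathcal S=\{i:M_i=1\}$ (fixed under $M_i(1)=M_i(0)$), $\mathcal S^\complement$ its complement. $\tau_{(1)}\le\dots\le\tau_{(n)}$ are the sorted individual effects of all units and $\tau_{\texttt o(1)}\le\dots\le\tau_{\texttt o(|\mathcal S|)}$ the sorted individual effects of units in $\mathcal S$. $\overline{\mathbb R}=\mathbb R\cup\{\pm\infty\}$. *)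

theory Defs
  imports "HOL-Probability.Probability"
begin

text \<open>Units are indexed by 0..<n. A treatment assignment is a function z :: nat => bool
  (z i = True means Z_i = 1), required to be False outside {0..<n}.\<close>

definition assignments :: "nat \<Rightarrow> nat \<Rightarrow> (nat \<Rightarrow> bool) set" where
  "assignments n n1 = {z. (\<forall>i. n \<le> i \<longrightarrow> \<not> z i) \<and> card {i. i < n \<and> z i} = n1}"

definition design :: "nat \<Rightarrow> nat \<Rightarrow> (nat \<Rightarrow> bool) pmf" where
  "design n n1 = pmf_of_set (assignments n n1)"

text \<open>k-th smallest (k starting at 1) of the individual effects of units in a finite index set A.\<close>
definition sorted_effect :: "(nat \<Rightarrow> real) \<Rightarrow> nat set \<Rightarrow> nat \<Rightarrow> real" where
  "sorted_effect tau A k = sort (map tau (sorted_list_of_set A)) ! (k - 1)"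

definition upper_interval :: "real set \<Rightarrow> bool" where
  "upper_interval I \<longleftrightarrow> (\<exists>c::ereal. I = {x. c < ereal x} \<or> I = {x. c \<le> ereal x})"

end

theory Submission
  imports Defs
begin

text \<open>If the units outside \<open>A \<subseteq> B\<close> number \<open>m\<close>, then at most \<open>m\<close> more of the effects of \<open>B\<close>
  than of \<open>A\<close> lie below any level, so the \<open>(j + m)\<close>-th smallest effect of \<open>B\<close> is at least the
  \<open>j\<close>-th smallest effect of \<open>A\<close>. Upper intervals are closed upwards, hence on every assignment on
  which the intervals cover the order statistics of \<open>A = S\<close>, the shifted intervals cover those of
  \<open>B = {..<n}\<close>; the probability bound follows by monotonicity of the measure. The inclusion holds
  pointwise, so neither the design nor the range of \<open>\<alpha>\<close> plays a role.\<close>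

lemma sorted_nth_le_iff_less_length_filter:
  fixes xs :: "'a::linorder list"
  assumes "sorted xs" "i < length xs"
  shows "xs ! i \<le> v \<longleftrightarrow> i < length (filter (\<lambda>x. x \<le> v) xs)"
proof
  assume "xs ! i \<le> v"
  then have "{0..i} \<subseteq> {p. p < length xs \<and> xs ! p \<le> v}"
    using assms by (auto simp: sorted_iff_nth_mono intro: order_trans[of _ "xs ! i"])
  then have "card {0..i} \<le> card {p. p < length xs \<and> xs ! p \<le> v}"
    by (intro card_mono) auto
  then show "i < length (filter (\<lambda>x. x \<le> v) xs)"
    by (simp add: length_filter_conv_card)
next
  assume count: "i < length (filter (\<lambda>x. x \<le> v) xs)"
  show "xs ! i \<le> v"
  proof (rule ccontr)
    assume "\<not> xs ! i \<le> v"
    then have "{p. p < length xs \<and> xs ! p \<le> v} \<subseteq> {..<i}"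
      using assms by (auto simp: sorted_iff_nth_mono) (meson less_le_trans not_le)
    then have "card {p. p < length xs \<and> xs ! p \<le> v} \<le> i"
      by (metis card_lessThan card_mono finite_lessThan)
    with count show False
      by (simp add: length_filter_conv_card)
  qed
qed

lemma length_filter_sort_map_sorted_list_of_set:
  assumes "finite A"
  shows "length (filter P (sort (map f (sorted_list_of_set A)))) = card {i \<in> A. P (f i)}"
proof -
  have "length (filter P (sort (map f (sorted_list_of_set A))))
      = length (filter (P \<circ> f) (sorted_list_of_set A))"
    by (simp add: filter_sort filter_map)
  also have "\<dots> = card {i \<in> A. P (f i)}"
    using assms by (simp add: distinct_length_filter Collect_conj_eq Int_commute)
  finally show ?thesis .
qed

lemma sorted_effect_le_iff:
  assumes "finite A" "1 \<le> k" "k \<le> card A"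
  shows "sorted_effect tau A k \<le> v \<longleftrightarrow> k \<le> card {i \<in> A. tau i \<le> v}"
proof -
  have "sorted_effect tau A k \<le> v
      \<longleftrightarrow> k - 1 < length (filter (\<lambda>x. x \<le> v) (sort (map tau (sorted_list_of_set A))))"
    unfolding sorted_effect_def
    using assms by (intro sorted_nth_le_iff_less_length_filter) auto
  then show ?thesis
    using assms by (auto simp: length_filter_sort_map_sorted_list_of_set)
qed

lemma card_eq_card_subset_add_card_Diff:
  assumes "finite B" "A \<subseteq> B"
  shows "card B = card A + card (B - A)"
  using card_Int_Diff[OF assms(1), of A] assms(2) by (simp add: inf.absorb2)

lemma sorted_effect_subset_le:
  assumes "finite B" "A \<subseteq> B" "card (B - A) < k" "k \<le> card B"
  shows "sorted_effect tau A (k - card (B - A)) \<le> sorted_effect tau B k"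
proof -
  define v where "v = sorted_effect tau B k"
  have "finite A"
    using assms(1,2) finite_subset by blast
  have card_B: "card B = card A + card (B - A)"
    using assms(1,2) by (rule card_eq_card_subset_add_card_Diff)
  have "k \<le> card {i \<in> B. tau i \<le> v}"
    using assms v_def sorted_effect_le_iff[of B k tau v] by simp
  also have "\<dots> \<le> card ({i \<in> A. tau i \<le> v} \<union> (B - A))"
    using assms(1) \<open>finite A\<close> by (intro card_mono) auto
  also have "\<dots> \<le> card {i \<in> A. tau i \<le> v} + card (B - A)"
    by (rule card_Un_le)
  finally have "k - card (B - A) \<le> card {i \<in> A. tau i \<le> v}"
    by linarith
  then show ?thesis
    unfolding v_def using \<open>finite A\<close> assms(3,4) card_B
    by (subst sorted_effect_le_iff) auto
qed

lemma upper_interval_upward_closed: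
  assumes "upper_interval I" "x \<in> I" "x \<le> y"
  shows "y \<in> I"
  using assms unfolding upper_interval_def
  by (auto intro: less_le_trans order_trans)

lemma upper_intervals_cover_sorted_effect_superset:
  assumes "finite B" "A \<subseteq> B"
    and upper: "\<And>k. 1 \<le> k \<Longrightarrow> k \<le> card A \<Longrightarrow> upper_interval (I k)"
    and cover: "\<And>k. 1 \<le> k \<Longrightarrow> k \<le> card A \<Longrightarrow> sorted_effect tau A k \<in> I k"
    and "1 \<le> k" "k \<le> card B"
  shows "sorted_effect tau B k \<in> (if k \<le> card (B - A) then UNIV else I (k - card (B - A)))"
proof (cases "k \<le> card (B - A)")
  case False
  let ?j = "k - card (B - A)"
  have "card B = card A + card (B - A)"
    using assms(1,2) by (rule card_eq_card_subset_add_card_Diff)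
  then have j: "1 \<le> ?j" "?j \<le> card A"
    using False \<open>k \<le> card B\<close> by auto
  have "sorted_effect tau B k \<in> I ?j"
    using upper_interval_upward_closed[OF upper[OF j] cover[OF j]]
      sorted_effect_subset_le[OF assms(1,2)] False \<open>k \<le> card B\<close> by simp
  with False show ?thesis
    by simp
qed simp

theorem corollary1:
  fixes n n1 n0 :: nat
    and Y0 Y1 :: "nat \<Rightarrow> real"
    and M0 M1 :: "nat \<Rightarrow> bool"
    and \<alpha> :: real
    and Io :: "(nat \<Rightarrow> bool) \<Rightarrow> nat \<Rightarrow> real set"
  defines "\<tau> \<equiv> (\<lambda>i. Y1 i - Y0 i)"
    and "S \<equiv> {i. i < n \<and> M1 i}"
  assumes "n1 \<ge> 1" and "n0 \<ge> 1" and "n = n1 + n0"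
    and "\<forall>i. M1 i = M0 i"
    and "0 < \<alpha>" and "\<alpha> < 1/2"
    and "\<forall>z k. 1 \<le> k \<and> k \<le> card S \<longrightarrow> upper_interval (Io z k)"
    and "measure_pmf.prob (design n n1)
           {z. \<forall>k. 1 \<le> k \<and> k \<le> card S \<longrightarrow> sorted_effect \<tau> S k \<in> Io z k} \<ge> 1 - 2 * \<alpha>"
  shows "measure_pmf.prob (design n n1)
           {z. \<forall>k. 1 \<le> k \<and> k \<le> n \<longrightarrow>
                 sorted_effect \<tau> {..<n} k \<in>
                   (if k \<le> card ({..<n} - S) then UNIV else Io z (k - card ({..<n} - S)))}
         \<ge> 1 - 2 * \<alpha>"
proof -
  have "S \<subseteq> {..<n}"
    unfolding S_def by auto
  then have sharp_superset: "{z. \<forall>k. 1 \<le> k \<and> k \<le> card S \<longrightarrow> sorted_effect \<tau> S k \<in> Io z k}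
    \<subseteq> {z. \<forall>k. 1 \<le> k \<and> k \<le> n \<longrightarrow>
                 sorted_effect \<tau> {..<n} k \<in>
                   (if k \<le> card ({..<n} - S) then UNIV else Io z (k - card ({..<n} - S)))}"
    using upper_intervals_cover_sorted_effect_superset[of "{..<n}" S "Io _"] assms(9)
    by (simp add: Collect_mono_iff)
  from measure_pmf.finite_measure_mono[OF sharp_superset, of "design n n1"] assms(10) show ?thesis
    by simp
qed

end
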